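(* Let $\mathcal{L}$ be a $C^2$ function, positively scale-invariant in $\boldsymbol{W}$, bounded below with $\mathcal{L}^*=\inf\mathcal{L}$, satisfying the normalized smoothness assumption (A$_V$) with constants $L^{\boldsymbol{v}\boldsymbol{v}}_{ij},L^{\boldsymbol{v}\boldsymbol{g}}_i,L^{\boldsymbol{g}\boldsymbol{g}}$. Let $(\boldsymbol{W}_t,\boldsymbol{g}_t)$ be the iterates of PSI-GD with step sizes $\eta_i=1/\tilde{L}_{\boldsymbol{v}^{(i)}}$ and $\eta_{\boldsymbol{g}}=1/\tilde{L}_{\boldsymbol{g}}$, and $\boldsymbol{V}_t$ the normalization of $\boldsymbol{W}_t$. Then for every $T\ge1$, $$\min_{0\le t<T}\big\|\nabla_{\boldsymbol{V},\boldsymbol{g}}\mathcal{L}(\boldsymbol{V}_t,\boldsymbol{g}_t)\big\|^2\le\frac{2\tilde{L}\,(\mathcal{L}(\boldsymbol{W}_0,\boldsymbol{g}_0)-\mathcal{L}^* )}{T},$$ where $\tilde{L}=\max\{\tilde{L}_{\boldsymbol{v}^{(1)}},\dots,\tilde{L}_{\boldsymbol{v}^{(m)}},\tilde{L}_{\boldsymbol{g}}\}$.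
   Context: Parameters $(\boldsymbol{W},\boldsymbol{g})$, $\boldsymbol{W}=(\boldsymbol{w}^{(1)},\dots,\boldsymbol{w}^{(m)})$, $\boldsymbol{w}^{(i)}\in\mathbb{R}^{d_i}\setminus\{0\}$, $\boldsymbol{g}\in\mathbb{R}^p$; $\mathcal{L}$ is PSI in $\boldsymbol{W}$: $\mathcal{L}((a_1\boldsymbol{w}^{(1)},\dots,a_m\boldsymbol{w}^{(m)}),\boldsymbol{g})=\mathcal{L}(\boldsymbol{W},\boldsymbol{g})$ for all $a_i>0$. The normalization of $\boldsymbol{W}$ is $\boldsymbol{V}=(\boldsymbol{w}^{(1)}/\|\boldsymbol{w}^{(1)}\|,\dots,\boldsymbol{w}^{(m)}/\|\boldsymbol{w}^{(m)}\|)$; $\nabla_{\boldsymbol{V},\boldsymbol{g}}\mathcal{L}(\boldsymbol{V},\boldsymbol{g})$ denotes the full gradient of $\mathcal{L}$ (as a function of $(\boldsymbol{W},\boldsymbol{g})$) evaluated at the point $(\boldsymbol{V},\boldsymbol{g})$, and Hessian blocks $\nabla^2_{\boldsymbol{v}^{(i)}\boldsymbol{v}^{(j)}}\mathcal{L}$ etc. are the corresponding blocks of the Hessian of $\mathcal{L}$ evaluated at $(\boldsymbol{V},\boldsymbol{g})$. Assumption (A$_V$): for all $(\boldsymbol{V},\boldsymbol{g})$ with every block of $\boldsymbol{V}$ a unit vector, $\|\nabla^2_{\boldsymbol{v}^{(i)}\boldsymbol{v}^{(j)}}\mathcal{L}(\boldsymbol{V},\boldsymbol{g})\|_2\le L^{\boldsymbol{v}\boldsymbol{v}}_{ij}$,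 $\|\nabla^2_{\boldsymbol{v}^{(i)}\boldsymbol{g}}\mathcal{L}(\boldsymbol{V},\boldsymbol{g})\|_2\le L^{\boldsymbol{v}\boldsymbol{g}}_{i}$, $\|\nabla^2_{\boldsymbol{g}\boldsymbol{g}}\mathcal{L}(\boldsymbol{V},\boldsymbol{g})\|_2\le L^{\boldsymbol{g}\boldsymbol{g}}$ (spectral norms). Set $\tilde{L}_{\boldsymbol{v}^{(i)}}=L^{\boldsymbol{v}\boldsymbol{g}}_i+\sum_{j=1}^mL^{\boldsymbol{v}\boldsymbol{v}}_{ij}$ and $\tilde{L}_{\boldsymbol{g}}=mL^{\boldsymbol{g}\boldsymbol{g}}+\sum_{i=1}^mL^{\boldsymbol{v}\boldsymbol{g}}_i$ (assumed positive). PSI-GD: $\boldsymbol{w}^{(i)}_{t+1}=\boldsymbol{w}^{(i)}_t-\eta_i\|\boldsymbol{w}^{(i)}_t\|^2\nabla_{\boldsymbol{w}^{(i)}}\mathcal{L}(\boldsymbol{W}_t,\boldsymbol{g}_t)$ for each $i$, and $\boldsymbol{g}_{t+1}=\boldsymbol{g}_t-\eta_{\boldsymbol{g}}\nabla_{\boldsymbol{g}}\mathcal{L}(\boldsymbol{W}_t,\boldsymbol{g}_t)$. *)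

theory Defs
  imports "HOL-Analysis.Analysis"
begin

text \<open>The block parameter W = (w^(1),...,w^(m)) is a vector x :: real^'k whose coordinates
  are partitioned into the m blocks by blk :: 'k => nat (block i = {j. blk j = i}, i < m).\<close>

definition blockproj :: "('k::finite \<Rightarrow> nat) \<Rightarrow> nat \<Rightarrow> real^'k \<Rightarrow> real^'k" where
  "blockproj blk i x = (\<chi> j. if blk j = i then x $ j else 0)"

definition PW :: "('k::finite \<Rightarrow> nat) \<Rightarrow> nat \<Rightarrow> (real^'k) \<times> (real^'p::finite) \<Rightarrow> (real^'k) \<times> (real^'p)" where
  "PW blk i z = (blockproj blk i (fst z), 0)"

definition PG :: "(real^'k::finite) \<times> (real^'p::finite) \<Rightarrow> (real^'k) \<times> (real^'p)" where
  "PG z = (0, snd z)"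

text \<open>parameters with every block nonzero (the domain of L)\<close>
definition dom_nz :: "('k::finite \<Rightarrow> nat) \<Rightarrow> nat \<Rightarrow> ((real^'k) \<times> (real^'p)) set" where
  "dom_nz blk m = {z. \<forall>i<m. blockproj blk i (fst z) \<noteq> 0}"

definition scale_blocks :: "('k::finite \<Rightarrow> nat) \<Rightarrow> (nat \<Rightarrow> real) \<Rightarrow> real^'k \<Rightarrow> real^'k" where
  "scale_blocks blk a x = (\<chi> j. a (blk j) * x $ j)"

definition PSI :: "('k::finite \<Rightarrow> nat) \<Rightarrow> nat \<Rightarrow> ((real^'k) \<times> (real^'p::finite) \<Rightarrow> real) \<Rightarrow> bool" where
  "PSI blk m L \<longleftrightarrow> (\<forall>a x g. (\<forall>i<m. a i > 0) \<longrightarrow> (x, g) \<in> dom_nz blk m \<longrightarrow>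
      L (scale_blocks blk a x, g) = L (x, g))"

definition normalize_blocks :: "('k::finite \<Rightarrow> nat) \<Rightarrow> real^'k \<Rightarrow> real^'k" where
  "normalize_blocks blk x = (\<chi> j. x $ j / norm (blockproj blk (blk j) x))"

definition unit_blocks :: "('k::finite \<Rightarrow> nat) \<Rightarrow> nat \<Rightarrow> real^'k \<Rightarrow> bool" where
  "unit_blocks blk m x \<longleftrightarrow> (\<forall>i<m. norm (blockproj blk i x) = 1)"

definition Ltil_v :: "nat \<Rightarrow> (nat \<Rightarrow> nat \<Rightarrow> real) \<Rightarrow> (nat \<Rightarrow> real) \<Rightarrow> nat \<Rightarrow> real" where
  "Ltil_v m Lvv Lvg i = Lvg i + (\<Sum>j<m. Lvv i j)"

definition Ltil_g :: "nat \<Rightarrow> (nat \<Rightarrow> real) \<Rightarrow> real \<Rightarrow> real" where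
  "Ltil_g m Lvg Lgg = real m * Lgg + (\<Sum>i<m. Lvg i)"

definition Ltil_max :: "nat \<Rightarrow> (nat \<Rightarrow> nat \<Rightarrow> real) \<Rightarrow> (nat \<Rightarrow> real) \<Rightarrow> real \<Rightarrow> real" where
  "Ltil_max m Lvv Lvg Lgg = Max (insert (Ltil_g m Lvg Lgg) (Ltil_v m Lvv Lvg ` {..<m}))"

end

theory Submission
  imports Defs
begin

text \<open>By positive scale invariance, rescaling block i by a_i divides the i-th block of the
  gradient by a_i and conjugates the Hessian accordingly. Hence a PSI-GD step from W is, up to
  this rescaling, the preconditioned gradient step d from the normalized point (V, g), with
  step sizes 1/Ltil_v i and 1/Ltil_g. Euler's identity makes d orthogonal to every unit block of
  V, so all blocks stay of norm at least 1 along the segment from (V, g) to (V, g) + d; there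
  (A_V), transported by the rescaling and combined with symmetry of the Hessian, bounds the
  quadratic form of the Hessian by the weighted norm with weights Ltil_v i and Ltil_g. The
  descent lemma then decreases L by at least |grad L(V, g)|^2 / (2 Ltil) per step, and
  telescoping against Inf L gives the bound on the minimum.\<close>

lemma has_real_derivative_along_line:
  fixes L :: "'a::real_inner \<Rightarrow> real" and G :: "'a \<Rightarrow> 'a"
  assumes "(L has_derivative (\<lambda>h. G (z + s *\<^sub>R d) \<bullet> h)) (at (z + s *\<^sub>R d))"
  shows "((\<lambda>s. L (z + s *\<^sub>R d)) has_real_derivative (G (z + s *\<^sub>R d) \<bullet> d)) (at s)"
proof -
  have "((\<lambda>s. z + s *\<^sub>R d) has_derivative (\<lambda>h. h *\<^sub>R d)) (at s)"
    by (auto intro!: derivative_eq_intros)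
  from has_derivative_compose[OF this assms] show ?thesis
    by (rule has_derivative_imp_has_field_derivative) simp
qed

lemma has_real_derivative_inner_along_line:
  fixes G :: "'a::real_inner \<Rightarrow> 'a" and H :: "'a \<Rightarrow> 'a \<Rightarrow>\<^sub>L 'a"
  assumes "(G has_derivative blinfun_apply (H (z + s *\<^sub>R d))) (at (z + s *\<^sub>R d))"
  shows "((\<lambda>s. G (z + s *\<^sub>R d) \<bullet> u) has_real_derivative (H (z + s *\<^sub>R d) d \<bullet> u)) (at s)"
proof -
  have "((\<lambda>s. z + s *\<^sub>R d) has_derivative (\<lambda>h. h *\<^sub>R d)) (at s)"
    by (auto intro!: derivative_eq_intros)
  from has_derivative_inner_left[OF has_derivative_compose[OF this assms]] show ?thesis
    by (rule has_derivative_imp_has_field_derivative) (simp add: blinfun.scaleR_right)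
qed

lemma second_order_upper_bound_on_segment:
  fixes L :: "'a::real_inner \<Rightarrow> real" and G :: "'a \<Rightarrow> 'a" and H :: "'a \<Rightarrow> 'a \<Rightarrow>\<^sub>L 'a"
  assumes grad: "\<forall>z\<in>S. (L has_derivative (\<lambda>h. G z \<bullet> h)) (at z)"
    and hess: "\<forall>z\<in>S. (G has_derivative blinfun_apply (H z)) (at z)"
    and seg: "\<And>s. 0 \<le> s \<Longrightarrow> s \<le> 1 \<Longrightarrow> z + s *\<^sub>R d \<in> S"
    and curv: "\<And>s. 0 \<le> s \<Longrightarrow> s \<le> 1 \<Longrightarrow> d \<bullet> H (z + s *\<^sub>R d) d \<le> M"
  shows "L (z + d) \<le> L z + G z \<bullet> d + M / 2"
proof -
  have slope: "G (z + s *\<^sub>R d) \<bullet> d - G z \<bullet> d \<le> s * M" if "0 < s" "s \<le> 1" for s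
  proof -
    have "((\<lambda>s. G (z + s *\<^sub>R d) \<bullet> d) has_real_derivative (H (z + r *\<^sub>R d) d \<bullet> d)) (at r)"
      if "0 \<le> r" "r \<le> s" for r
      using hess seg[of r] that \<open>s \<le> 1\<close> by (intro has_real_derivative_inner_along_line) simp
    from MVT2[OF \<open>0 < s\<close> this] obtain r where "0 < r" "r < s"
      and "G (z + s *\<^sub>R d) \<bullet> d - G z \<bullet> d = s * (H (z + r *\<^sub>R d) d \<bullet> d)"
      by auto
    with curv[of r] \<open>s \<le> 1\<close> show ?thesis
      by (simp add: inner_commute mult_left_mono)
  qed
  define \<phi> where "\<phi> s = L (z + s *\<^sub>R d) - s * (G z \<bullet> d) - M * s\<^sup>2 / 2" for s
  have "(\<phi> has_real_derivative (G (z + s *\<^sub>R d) \<bullet> d - G z \<bullet> d - M * s)) (at s)"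
    if "0 \<le> s" "s \<le> 1" for s
    unfolding \<phi>_def using grad seg[OF that]
    by (auto intro!: derivative_eq_intros has_real_derivative_along_line)
  from MVT2[of 0 1 \<phi>, OF _ this] obtain s where "0 < s" "s < 1"
    and "\<phi> 1 - \<phi> 0 = G (z + s *\<^sub>R d) \<bullet> d - G z \<bullet> d - M * s"
    by auto
  with slope[of s] have "\<phi> 1 \<le> \<phi> 0" by (simp add: mult.commute)
  then show ?thesis unfolding \<phi>_def by simp
qed

lemma second_difference_mean_value:
  fixes L :: "'a::real_inner \<Rightarrow> real" and G :: "'a \<Rightarrow> 'a" and H :: "'a \<Rightarrow> 'a \<Rightarrow>\<^sub>L 'a"
  assumes grad: "\<forall>z\<in>S. (L has_derivative (\<lambda>h. G z \<bullet> h)) (at z)"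
    and hess: "\<forall>z\<in>S. (G has_derivative blinfun_apply (H z)) (at z)"
    and box: "\<And>s t. 0 \<le> s \<Longrightarrow> s \<le> \<epsilon> \<Longrightarrow> 0 \<le> t \<Longrightarrow> t \<le> \<epsilon> \<Longrightarrow> w + s *\<^sub>R u + t *\<^sub>R v \<in> S"
    and "\<epsilon> > 0"
  obtains s t where "0 \<le> s" "s \<le> \<epsilon>" "0 \<le> t" "t \<le> \<epsilon>"
    "L (w + \<epsilon> *\<^sub>R u + \<epsilon> *\<^sub>R v) - L (w + \<epsilon> *\<^sub>R u) - L (w + \<epsilon> *\<^sub>R v) + L w
       = \<epsilon>\<^sup>2 * (H (w + s *\<^sub>R u + t *\<^sub>R v) v \<bullet> u)"
proof -
  define p where "p s = L ((w + \<epsilon> *\<^sub>R v) + s *\<^sub>R u) - L (w + s *\<^sub>R u)" for s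
  have "(p has_real_derivative (G ((w + \<epsilon> *\<^sub>R v) + s *\<^sub>R u) \<bullet> u - G (w + s *\<^sub>R u) \<bullet> u)) (at s)"
    if "0 \<le> s" "s \<le> \<epsilon>" for s
  proof -
    have "w + \<epsilon> *\<^sub>R v + s *\<^sub>R u \<in> S" "w + s *\<^sub>R u \<in> S"
      using box[of s \<epsilon>] box[of s 0] that \<open>\<epsilon> > 0\<close> by (simp_all add: algebra_simps)
    with grad show ?thesis
      unfolding p_def by (intro DERIV_diff has_real_derivative_along_line) auto
  qed
  from MVT2[OF \<open>\<epsilon> > 0\<close> this] obtain s where s: "0 < s" "s < \<epsilon>"
    and p: "p \<epsilon> - p 0 = \<epsilon> * (G ((w + \<epsilon> *\<^sub>R v) + s *\<^sub>R u) \<bullet> u - G (w + s *\<^sub>R u) \<bullet> u)"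
    by auto
  define q where "q t = G ((w + s *\<^sub>R u) + t *\<^sub>R v) \<bullet> u" for t
  have "(q has_real_derivative (H ((w + s *\<^sub>R u) + t *\<^sub>R v) v \<bullet> u)) (at t)"
    if "0 \<le> t" "t \<le> \<epsilon>" for t
    unfolding q_def using hess box[of s t] that s
    by (intro has_real_derivative_inner_along_line) auto
  from MVT2[OF \<open>\<epsilon> > 0\<close> this] obtain t where t: "0 < t" "t < \<epsilon>"
    and q: "q \<epsilon> - q 0 = \<epsilon> * (H ((w + s *\<^sub>R u) + t *\<^sub>R v) v \<bullet> u)"
    by auto
  from p q have "L (w + \<epsilon> *\<^sub>R u + \<epsilon> *\<^sub>R v) - L (w + \<epsilon> *\<^sub>R u) - L (w + \<epsilon> *\<^sub>R v) + L w
       = \<epsilon>\<^sup>2 * (H (w + s *\<^sub>R u + t *\<^sub>R v) v \<bullet> u)"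
    unfolding p_def q_def by (simp add: algebra_simps power2_eq_square)
  with s t show thesis by (intro that[of s t]) auto
qed

lemma abs_inner_blinfun_diff_le:
  fixes A B :: "'a::real_inner \<Rightarrow>\<^sub>L 'a"
  assumes "norm (A - B) \<le> e"
  shows "\<bar>A v \<bullet> u - B v \<bullet> u\<bar> \<le> e * (norm u * norm v)"
proof -
  have "\<bar>A v \<bullet> u - B v \<bullet> u\<bar> = \<bar>(A - B) v \<bullet> u\<bar>"
    by (simp add: blinfun.diff_left inner_diff_left)
  also have "\<dots> \<le> norm ((A - B) v) * norm u" by (rule Cauchy_Schwarz_ineq2)
  also have "\<dots> \<le> norm (A - B) * norm v * norm u"
    by (intro mult_right_mono norm_blinfun) auto
  also have "\<dots> \<le> e * norm v * norm u"
    using assms by (intro mult_right_mono) auto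
  finally show ?thesis by (simp add: algebra_simps)
qed

lemma zero_if_abs_le_mult_all_pos:
  fixes x c :: real
  assumes "\<And>e. e > 0 \<Longrightarrow> \<bar>x\<bar> \<le> c * e" and "c \<ge> 0"
  shows "x = 0"
proof (rule ccontr)
  assume "x \<noteq> 0"
  then have "\<bar>x\<bar> \<le> c * (\<bar>x\<bar> / (2 * (c + 1)))"
    using assms by (intro assms(1)) (simp add: add_nonneg_pos)
  also have "\<dots> < \<bar>x\<bar>"
    using \<open>x \<noteq> 0\<close> \<open>c \<ge> 0\<close> by (auto simp: field_simps intro!: add_nonneg_pos)
  finally show False by simp
qed

lemma small_box_in_ball:
  fixes w u v :: "'a::real_normed_vector"
  assumes "\<delta> > 0"
  obtains \<epsilon> where "\<epsilon> > 0"
    "\<And>s t. 0 \<le> s \<Longrightarrow> s \<le> \<epsilon> \<Longrightarrow> 0 \<le> t \<Longrightarrow> t \<le> \<epsilon> \<Longrightarrow> w + s *\<^sub>R u + t *\<^sub>R v \<in> ball w \<delta>"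
proof -
  define \<epsilon> where "\<epsilon> = \<delta> / (2 * (norm u + norm v + 1))"
  have N: "2 * (norm u + norm v + 1) > 0"
    by (smt (verit) norm_ge_zero)
  then have "\<epsilon> > 0" using assms by (simp add: \<epsilon>_def)
  have "\<epsilon> * (norm u + norm v) < \<epsilon> * (2 * (norm u + norm v + 1))"
    using \<open>\<epsilon> > 0\<close> by (intro mult_strict_left_mono) (auto intro!: add_nonneg_pos)
  also have "\<dots> = \<delta>" using N by (simp add: \<epsilon>_def)
  finally have small: "\<epsilon> * (norm u + norm v) < \<delta>" .
  show thesis
  proof (rule that[OF \<open>\<epsilon> > 0\<close>])
    fix s t assume st: "0 \<le> s" "s \<le> \<epsilon>" "0 \<le> t" "t \<le> \<epsilon>"
    have "norm (s *\<^sub>R u + t *\<^sub>R v) \<le> s * norm u + t * norm v"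
      using st norm_triangle_ineq[of "s *\<^sub>R u" "t *\<^sub>R v"] by simp
    also have "\<dots> \<le> \<epsilon> * (norm u + norm v)"
      using st by (simp add: distrib_left add_mono mult_right_mono)
    moreover have "dist w (w + s *\<^sub>R u + t *\<^sub>R v) = norm (s *\<^sub>R u + t *\<^sub>R v)"
      by (simp add: dist_norm norm_minus_commute add.assoc add.commute)
    ultimately show "w + s *\<^sub>R u + t *\<^sub>R v \<in> ball w \<delta>" using small by simp
  qed
qed

lemma hessian_near_symmetric:
  fixes L :: "'a::real_inner \<Rightarrow> real" and G :: "'a \<Rightarrow> 'a" and H :: "'a \<Rightarrow> 'a \<Rightarrow>\<^sub>L 'a"
  assumes S: "open S"
    and grad: "\<forall>z\<in>S. (L has_derivative (\<lambda>h. G z \<bullet> h)) (at z)"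
    and hess: "\<forall>z\<in>S. (G has_derivative blinfun_apply (H z)) (at z)"
    and cont: "continuous_on S H"
    and w: "w \<in> S" and "e > 0"
  shows "\<bar>H w v \<bullet> u - H w u \<bullet> v\<bar> \<le> 2 * (norm u * norm v) * e"
proof -
  obtain \<delta> where \<delta>: "\<delta> > 0" "ball w \<delta> \<subseteq> S" "\<forall>y\<in>ball w \<delta>. norm (H y - H w) < e"
  proof -
    obtain d1 where "d1 > 0" "ball w d1 \<subseteq> S" using S w open_contains_ball by blast
    moreover obtain d2 where "d2 > 0" "\<forall>y\<in>S. dist y w < d2 \<longrightarrow> dist (H y) (H w) < e"
      using cont w \<open>e > 0\<close> unfolding continuous_on_iff by blast
    ultimately show thesis
      by (intro that[of "min d1 d2"]) (auto simp: dist_norm norm_minus_commute subset_iff)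
  qed
  obtain \<epsilon> where \<epsilon>: "\<epsilon> > 0" and box:
    "\<And>s t. 0 \<le> s \<Longrightarrow> s \<le> \<epsilon> \<Longrightarrow> 0 \<le> t \<Longrightarrow> t \<le> \<epsilon> \<Longrightarrow> w + s *\<^sub>R u + t *\<^sub>R v \<in> ball w \<delta>"
    using small_box_in_ball[OF \<delta>(1)] by blast
  have box': "w + s *\<^sub>R v + t *\<^sub>R u \<in> ball w \<delta>"
    if "0 \<le> s" "s \<le> \<epsilon>" "0 \<le> t" "t \<le> \<epsilon>" for s t
    using box[of t s] that by (simp add: algebra_simps)
  obtain s1 t1 where st1: "0 \<le> s1" "s1 \<le> \<epsilon>" "0 \<le> t1" "t1 \<le> \<epsilon>" and E1:
    "L (w + \<epsilon> *\<^sub>R u + \<epsilon> *\<^sub>R v) - L (w + \<epsilon> *\<^sub>R u) - L (w + \<epsilon> *\<^sub>R v) + L w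
     = \<epsilon>\<^sup>2 * (H (w + s1 *\<^sub>R u + t1 *\<^sub>R v) v \<bullet> u)"
    using second_difference_mean_value[OF grad hess _ \<epsilon>] box \<delta>(2) by blast
  obtain s2 t2 where st2: "0 \<le> s2" "s2 \<le> \<epsilon>" "0 \<le> t2" "t2 \<le> \<epsilon>" and E2:
    "L (w + \<epsilon> *\<^sub>R v + \<epsilon> *\<^sub>R u) - L (w + \<epsilon> *\<^sub>R v) - L (w + \<epsilon> *\<^sub>R u) + L w
     = \<epsilon>\<^sup>2 * (H (w + s2 *\<^sub>R v + t2 *\<^sub>R u) u \<bullet> v)"
    using second_difference_mean_value[OF grad hess _ \<epsilon>] box' \<delta>(2) by blast
  define y1 where "y1 = w + s1 *\<^sub>R u + t1 *\<^sub>R v"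
  define y2 where "y2 = w + s2 *\<^sub>R v + t2 *\<^sub>R u"
  have "H y1 v \<bullet> u = H y2 u \<bullet> v"
    using E1 E2 \<epsilon> unfolding y1_def y2_def by (simp add: algebra_simps)
  moreover have "norm (H y1 - H w) \<le> e" "norm (H y2 - H w) \<le> e"
    using \<delta>(3) box[OF st1] box'[OF st2] unfolding y1_def y2_def by (auto simp: less_imp_le)
  ultimately show ?thesis
    using abs_inner_blinfun_diff_le[of "H y1" "H w" e v u] abs_inner_blinfun_diff_le[of "H y2" "H w" e u v]
    by (simp add: algebra_simps)
qed

lemma hessian_symmetric:
  fixes L :: "'a::real_inner \<Rightarrow> real" and G :: "'a \<Rightarrow> 'a" and H :: "'a \<Rightarrow> 'a \<Rightarrow>\<^sub>L 'a"
  assumes "open S"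
    and "\<forall>z\<in>S. (L has_derivative (\<lambda>h. G z \<bullet> h)) (at z)"
    and "\<forall>z\<in>S. (G has_derivative blinfun_apply (H z)) (at z)"
    and "continuous_on S H"
    and "w \<in> S"
  shows "H w v \<bullet> u = H w u \<bullet> v"
  using zero_if_abs_le_mult_all_pos[of "H w v \<bullet> u - H w u \<bullet> v"] hessian_near_symmetric[OF assms]
  by force

lemma blockproj_nth [simp]: "blockproj blk i x $ j = (if blk j = i then x $ j else 0)"
  by (simp add: blockproj_def)

lemma blockproj_add: "blockproj blk i (x + y) = blockproj blk i x + blockproj blk i y"
  by (simp add: vec_eq_iff)

lemma blockproj_scaleR: "blockproj blk i (c *\<^sub>R x) = c *\<^sub>R blockproj blk i x"
  by (simp add: vec_eq_iff)

lemma linear_blockproj: "linear (blockproj blk i)"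
  by (rule linearI) (simp_all add: blockproj_add blockproj_scaleR)

lemma inner_blockproj_left: "blockproj blk i x \<bullet> y = blockproj blk i x \<bullet> blockproj blk i y"
  unfolding inner_vec_def by (rule sum.cong) auto

lemma inner_blockproj_right: "x \<bullet> blockproj blk i y = blockproj blk i x \<bullet> blockproj blk i y"
  unfolding inner_vec_def by (rule sum.cong) auto

lemma blockproj_scale_blocks: "blockproj blk i (scale_blocks blk a x) = a i *\<^sub>R blockproj blk i x"
  by (simp add: vec_eq_iff scale_blocks_def)

lemma sum_blockproj:
  assumes "\<forall>j. blk j < m"
  shows "(\<Sum>i<m. blockproj blk i x) = x"
  using assms by (simp add: vec_eq_iff)

lemma scale_blocks_inverse:
  assumes "\<forall>j. blk j < m" "\<forall>i<m. a i \<noteq> 0"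
  shows "scale_blocks blk (\<lambda>i. 1 / a i) (scale_blocks blk a x) = x"
    "scale_blocks blk a (scale_blocks blk (\<lambda>i. 1 / a i) x) = x"
  using assms by (auto simp: vec_eq_iff scale_blocks_def)

lemma inner_scale_blocks: "scale_blocks blk a x \<bullet> y = x \<bullet> scale_blocks blk a y"
  by (simp add: inner_vec_def scale_blocks_def mult.assoc mult.left_commute)

lemma normalize_blocks_eq_scale_blocks:
  "normalize_blocks blk x = scale_blocks blk (\<lambda>i. 1 / norm (blockproj blk i x)) x"
  by (simp add: normalize_blocks_def scale_blocks_def vec_eq_iff)

lemma unit_blocks_normalize_blocks:
  assumes "\<forall>i<m. blockproj blk i x \<noteq> 0"
  shows "unit_blocks blk m (normalize_blocks blk x)"
  using assms by (simp add: unit_blocks_def normalize_blocks_eq_scale_blocks blockproj_scale_blocks)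

lemma scale_blocks_normalize_blocks:
  assumes "\<forall>j. blk j < m" "\<forall>i<m. blockproj blk i x \<noteq> 0"
  shows "scale_blocks blk (\<lambda>i. norm (blockproj blk i x)) (normalize_blocks blk x) = x"
  using assms by (simp add: normalize_blocks_eq_scale_blocks scale_blocks_def vec_eq_iff)

definition scale_params ::
    "('k::finite \<Rightarrow> nat) \<Rightarrow> (nat \<Rightarrow> real) \<Rightarrow> (real^'k) \<times> (real^'p::finite) \<Rightarrow> (real^'k) \<times> (real^'p)" where
  "scale_params blk a z = (scale_blocks blk a (fst z), snd z)"

lemma bounded_linear_scale_params: "bounded_linear (scale_params blk a)"
proof -
  have lin: "linear (scale_blocks blk a)"
    by (rule linearI) (simp_all add: scale_blocks_def vec_eq_iff algebra_simps)
  have "linear (scale_params blk a)"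
    unfolding scale_params_def
    by (rule linearI) (auto simp: linear_add[OF lin] lin[THEN linear_cmul])
  then show ?thesis by (simp add: linear_conv_bounded_linear)
qed

lemma scale_params_inverse:
  assumes "\<forall>j. blk j < m" "\<forall>i<m. a i \<noteq> 0"
  shows "scale_params blk (\<lambda>i. 1 / a i) (scale_params blk a z) = z"
    "scale_params blk a (scale_params blk (\<lambda>i. 1 / a i) z) = z"
  using scale_blocks_inverse[OF assms] by (auto simp: scale_params_def)

lemma inner_scale_params: "scale_params blk a u \<bullet> v = u \<bullet> scale_params blk a v"
  by (simp add: scale_params_def inner_prod_def inner_scale_blocks)

lemma scale_params_mem_dom_nz:
  "z \<in> dom_nz blk m \<Longrightarrow> \<forall>i<m. a i \<noteq> 0 \<Longrightarrow> scale_params blk a z \<in> dom_nz blk m"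
  by (auto simp: dom_nz_def scale_params_def blockproj_scale_blocks)

lemma open_dom_nz: "open (dom_nz blk m :: ((real^'k::finite) \<times> (real^'p::finite)) set)"
proof -
  have eq: "dom_nz blk m = (\<Inter>i<m. {z :: (real^'k) \<times> (real^'p). blockproj blk i (fst z) \<noteq> 0})"
    unfolding dom_nz_def by blast
  have "open {z :: (real^'k) \<times> (real^'p). blockproj blk i (fst z) \<noteq> 0}" for i
  proof (rule open_Collect_neq)
    show "continuous_on UNIV (\<lambda>z :: (real^'k) \<times> (real^'p). blockproj blk i (fst z))"
      using linear_conv_bounded_linear[THEN iffD1, OF linear_compose[OF linear_fst linear_blockproj]]
      by (intro linear_continuous_on) (simp add: o_def)
  qed (rule continuous_on_const)
  then show ?thesis unfolding eq by (intro open_INT) auto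
qed

lemma bounded_linear_PW: "bounded_linear (PW blk i)"
  unfolding PW_def using linear_blockproj[THEN linear_conv_bounded_linear[THEN iffD1]]
  by (auto intro!: bounded_linear_Pair bounded_linear_compose[OF _ bounded_linear_fst])

lemma bounded_linear_PG: "bounded_linear PG"
  unfolding PG_def by (auto intro!: bounded_linear_Pair bounded_linear_snd)

lemma PW_idem [simp]: "PW blk i (PW blk i z) = PW blk i z"
  by (simp add: PW_def blockproj_def vec_eq_iff)

lemma PG_idem [simp]: "PG (PG z) = PG z"
  by (simp add: PG_def)

lemma inner_PW_left: "PW blk i u \<bullet> v = PW blk i u \<bullet> PW blk i v"
  unfolding PW_def inner_prod_def by (simp add: inner_blockproj_left[of blk i "fst u" "fst v"])

lemma inner_PG_left: "PG u \<bullet> v = PG u \<bullet> PG v"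
  by (simp add: PG_def inner_prod_def)

lemma PW_scale_params: "PW blk i (scale_params blk a z) = a i *\<^sub>R PW blk i z"
  by (simp add: PW_def scale_params_def blockproj_scale_blocks)

lemma PG_scale_params: "PG (scale_params blk a z) = PG z"
  by (simp add: PG_def scale_params_def)

lemma sum_PW_add_PG:
  assumes "\<forall>j. blk j < m"
  shows "(\<Sum>i<m. PW blk i z) + PG z = z"
  using sum_blockproj[OF assms, of "fst z"]
  by (simp add: PW_def PG_def prod_eq_iff fst_sum snd_sum)

lemma inner_PW_PG_split:
  assumes "\<forall>j. blk j < m"
  shows "u \<bullet> v = (\<Sum>i<m. PW blk i u \<bullet> PW blk i v) + PG u \<bullet> PG v"
proof -
  have "u \<bullet> v = (\<Sum>i<m. PW blk i u \<bullet> v) + PG u \<bullet> v"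
    using sum_PW_add_PG[OF assms, of u] by (metis inner_add_left inner_sum_left)
  also have "\<dots> = (\<Sum>i<m. PW blk i u \<bullet> PW blk i v) + PG u \<bullet> PG v"
    by (intro arg_cong2[where f = "(+)"] sum.cong refl inner_PW_left inner_PG_left)
  finally show ?thesis .
qed

lemma norm2_PW_PG_split:
  assumes "\<forall>j. blk j < m"
  shows "(norm u)\<^sup>2 = (\<Sum>i<m. (norm (PW blk i u))\<^sup>2) + (norm (PG u))\<^sup>2"
  using inner_PW_PG_split[OF assms, of u u] by (simp add: power2_norm_eq_inner)

lemma inner_blinfun_block_expansion:
  fixes A :: "((real^'k::finite) \<times> (real^'p::finite)) \<Rightarrow>\<^sub>L ((real^'k) \<times> (real^'p))"
  assumes "\<forall>j. blk j < m"
  shows "d \<bullet> A d = (\<Sum>i<m. \<Sum>j<m. PW blk j d \<bullet> A (PW blk i d)) + (\<Sum>j<m. PW blk j d \<bullet> A (PG d))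
      + (\<Sum>i<m. PG d \<bullet> A (PW blk i d)) + PG d \<bullet> A (PG d)"
proof -
  have d: "d = (\<Sum>i<m. PW blk i d) + PG d" using sum_PW_add_PG[OF assms, of d] by simp
  have "d \<bullet> A d = ((\<Sum>j<m. PW blk j d) + PG d) \<bullet> A ((\<Sum>i<m. PW blk i d) + PG d)"
    using d by simp
  then show ?thesis
    by (simp add: blinfun.add_right blinfun.sum_right inner_add_left inner_add_right
        inner_sum_left inner_sum_right sum.distrib)
qed

lemma le_half_squares_if_le_products:
  fixes c A B x y :: real
  assumes "c \<le> A * x * y" "c \<le> B * x * y" "0 \<le> A" "0 \<le> B" "0 \<le> x" "0 \<le> y"
  shows "c \<le> A * x\<^sup>2 / 2 + B * y\<^sup>2 / 2"
proof -
  have xy: "2 * (x * y) \<le> x\<^sup>2 + y\<^sup>2" using sum_squares_bound[of x y] by (simp add: algebra_simps)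
  show ?thesis
  proof (cases "A \<le> B")
    case True
    then have "A * (2 * (x * y)) \<le> A * x\<^sup>2 + B * y\<^sup>2"
      using mult_left_mono[OF xy assms(3)] mult_right_mono[of A B "y\<^sup>2"] by (simp add: algebra_simps)
    with assms(1) show ?thesis by (simp add: algebra_simps)
  next
    case False
    then have "B * (2 * (x * y)) \<le> A * x\<^sup>2 + B * y\<^sup>2"
      using mult_left_mono[OF xy assms(4)] mult_right_mono[of B A "x\<^sup>2"] by (simp add: algebra_simps)
    with assms(2) show ?thesis by (simp add: algebra_simps)
  qed
qed

text \<open>Bounding each cross term by both c i j and c j i (as a symmetric Hessian allows) is what
  lets the row sums alone control the double sum.\<close>
lemma sum_pairs_le_row_sums:
  fixes b c :: "nat \<Rightarrow> nat \<Rightarrow> real" and a :: "nat \<Rightarrow> real"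
  assumes "\<And>i j. i < m \<Longrightarrow> j < m \<Longrightarrow> b i j \<le> c i j * a i * a j"
    and "\<And>i j. i < m \<Longrightarrow> j < m \<Longrightarrow> b i j \<le> c j i * a i * a j"
    and "\<And>i j. i < m \<Longrightarrow> j < m \<Longrightarrow> 0 \<le> c i j" and "\<And>i. 0 \<le> a i"
  shows "(\<Sum>i<m. \<Sum>j<m. b i j) \<le> (\<Sum>i<m. (\<Sum>j<m. c i j) * (a i)\<^sup>2)"
proof -
  have "(\<Sum>i<m. \<Sum>j<m. b i j) \<le> (\<Sum>i<m. \<Sum>j<m. c i j * (a i)\<^sup>2 / 2 + c j i * (a j)\<^sup>2 / 2)"
    using assms by (intro sum_mono le_half_squares_if_le_products) auto
  also have "\<dots> = (\<Sum>i<m. \<Sum>j<m. c i j * (a i)\<^sup>2 / 2) + (\<Sum>i<m. \<Sum>j<m. c j i * (a j)\<^sup>2 / 2)"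
    by (simp add: sum.distrib)
  also have "(\<Sum>i<m. \<Sum>j<m. c j i * (a j)\<^sup>2 / 2) = (\<Sum>j<m. \<Sum>i<m. c j i * (a j)\<^sup>2 / 2)"
    by (rule sum.swap)
  also have "(\<Sum>i<m. \<Sum>j<m. c i j * (a i)\<^sup>2 / 2) + (\<Sum>j<m. \<Sum>i<m. c j i * (a j)\<^sup>2 / 2)
      = (\<Sum>i<m. (\<Sum>j<m. c i j) * (a i)\<^sup>2)"
    by (simp add: sum_distrib_right sum_divide_distrib[symmetric])
  finally show ?thesis .
qed

lemma sum_cross_terms_le:
  fixes b c a :: "nat \<Rightarrow> real"
  assumes "\<And>i. i < m \<Longrightarrow> b i \<le> c i * y * a i" and "\<And>i. i < m \<Longrightarrow> 0 \<le> c i"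
  shows "(\<Sum>i<m. 2 * b i) \<le> (\<Sum>i<m. c i * (a i)\<^sup>2) + (\<Sum>i<m. c i) * y\<^sup>2"
proof -
  have "(\<Sum>i<m. 2 * b i) \<le> (\<Sum>i<m. c i * ((a i)\<^sup>2 + y\<^sup>2))"
  proof (rule sum_mono)
    fix i assume "i \<in> {..<m}"
    then have "2 * b i \<le> c i * (2 * (y * a i))" "0 \<le> c i"
      using assms by (auto simp: algebra_simps)
    moreover have "2 * (y * a i) \<le> (a i)\<^sup>2 + y\<^sup>2"
      using sum_squares_bound[of "a i" y] by (simp add: algebra_simps)
    ultimately show "2 * b i \<le> c i * ((a i)\<^sup>2 + y\<^sup>2)"
      by (meson mult_left_mono order_trans)
  qed
  also have "\<dots> = (\<Sum>i<m. c i * (a i)\<^sup>2) + (\<Sum>i<m. c i) * y\<^sup>2"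
    by (simp add: algebra_simps sum.distrib sum_distrib_right)
  finally show ?thesis .
qed

lemma bounded_linear_comp_blinfun_comp:
  "bounded_linear P \<Longrightarrow> bounded_linear Q \<Longrightarrow> bounded_linear (P \<circ> blinfun_apply A \<circ> Q)"
  unfolding o_def
  by (rule bounded_linear_compose[OF _ bounded_linear_compose[OF blinfun.bounded_linear_right]])

lemma inner_proj_blinfun_proj_le:
  fixes A :: "'a::real_inner \<Rightarrow>\<^sub>L 'a"
  assumes P: "bounded_linear P" "\<And>x y. P x \<bullet> y = P x \<bullet> P y"
    and Q: "bounded_linear Q" "\<And>x. Q (Q x) = Q x"
    and bound: "onorm (P \<circ> blinfun_apply A \<circ> Q) \<le> c"
  shows "P u \<bullet> A (Q v) \<le> c * norm (P u) * norm (Q v)"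
proof -
  have bl: "bounded_linear (P \<circ> blinfun_apply A \<circ> Q)"
    using P(1) Q(1) by (rule bounded_linear_comp_blinfun_comp)
  have "P u \<bullet> A (Q v) = P u \<bullet> P (A (Q (Q v)))"
    by (simp only: Q(2)) (rule P(2))
  also have "\<dots> \<le> norm (P u) * norm ((P \<circ> blinfun_apply A \<circ> Q) (Q v))"
    using norm_cauchy_schwarz[of "P u" "(P \<circ> blinfun_apply A \<circ> Q) (Q v)"] by simp
  also have "\<dots> \<le> norm (P u) * (c * norm (Q v))"
    using onorm[OF bl, of "Q v"] mult_right_mono[OF bound norm_ge_zero[of "Q v"]]
    by (intro mult_left_mono) auto
  finally show ?thesis by (simp add: algebra_simps)
qed

lemma Ltil_v_le_Ltil_max: "i < m \<Longrightarrow> Ltil_v m Lvv Lvg i \<le> Ltil_max m Lvv Lvg Lgg"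
  unfolding Ltil_max_def by (intro Max_ge) auto

lemma Ltil_g_le_Ltil_max: "Ltil_g m Lvg Lgg \<le> Ltil_max m Lvv Lvg Lgg"
  unfolding Ltil_max_def by (intro Max_ge) auto

lemma Ltil_max_pos: "Ltil_g m Lvg Lgg > 0 \<Longrightarrow> Ltil_max m Lvv Lvg Lgg > 0"
  using Ltil_g_le_Ltil_max[of m Lvg Lgg Lvv] by linarith

lemma Min_lessThan_le_average:
  fixes c :: "nat \<Rightarrow> real"
  assumes "T \<ge> 1"
  shows "(MIN t\<in>{..<T}. c t) \<le> (\<Sum>t<T. c t) / real T"
proof -
  have "(\<Sum>t<T. MIN t\<in>{..<T}. c t) \<le> (\<Sum>t<T. c t)"
    by (intro sum_mono Min_le) auto
  with assms show ?thesis by (simp add: pos_le_divide_eq mult.commute)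
qed

locale psi_loss =
  fixes blk :: "'k::finite \<Rightarrow> nat" and m :: nat
    and L :: "(real^'k) \<times> (real^'p::finite) \<Rightarrow> real"
    and G :: "(real^'k) \<times> (real^'p) \<Rightarrow> (real^'k) \<times> (real^'p)"
    and H :: "(real^'k) \<times> (real^'p) \<Rightarrow> ((real^'k) \<times> (real^'p)) \<Rightarrow>\<^sub>L ((real^'k) \<times> (real^'p))"
    and Lvv :: "nat \<Rightarrow> nat \<Rightarrow> real" and Lvg :: "nat \<Rightarrow> real" and Lgg :: real
  assumes blk_range: "\<forall>j. blk j < m"
    and grad: "\<forall>z\<in>dom_nz blk m. (L has_derivative (\<lambda>h. G z \<bullet> h)) (at z)"
    and hess: "\<forall>z\<in>dom_nz blk m. (G has_derivative blinfun_apply (H z)) (at z)"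
    and hess_cont: "continuous_on (dom_nz blk m) H"
    and psi: "PSI blk m L"
    and AV_vv: "\<forall>V gg i j. unit_blocks blk m V \<longrightarrow> i < m \<longrightarrow> j < m \<longrightarrow>
        onorm (PW blk j \<circ> blinfun_apply (H (V, gg)) \<circ> PW blk i) \<le> Lvv i j"
    and AV_vg: "\<forall>V gg i. unit_blocks blk m V \<longrightarrow> i < m \<longrightarrow>
        onorm (PG \<circ> blinfun_apply (H (V, gg)) \<circ> PW blk i) \<le> Lvg i"
    and AV_gg: "\<forall>V gg. unit_blocks blk m V \<longrightarrow>
        onorm (PG \<circ> blinfun_apply (H (V, gg)) \<circ> PG) \<le> Lgg"
    and unit_blocks_exist: "\<exists>V. unit_blocks blk m V"
    and pos_v: "\<forall>i<m. Ltil_v m Lvv Lvg i > 0"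
    and pos_g: "Ltil_g m Lvg Lgg > 0"
begin

abbreviation "D \<equiv> dom_nz blk m"

lemma unit_blocks_mem_dom: "unit_blocks blk m v \<Longrightarrow> (v, g) \<in> D"
  by (auto simp: unit_blocks_def dom_nz_def)

lemma L_scale_params: "z \<in> D \<Longrightarrow> \<forall>i<m. a i > 0 \<Longrightarrow> L (scale_params blk a z) = L z"
  using psi unfolding PSI_def scale_params_def by (cases z) auto

text \<open>Euler's identity: L is constant along the ray through each block.\<close>
lemma inner_grad_PW_self:
  assumes z: "z \<in> D" and i: "i < m"
  shows "G z \<bullet> PW blk i z = 0"
proof -
  define f where "f s = L (z + s *\<^sub>R PW blk i z)" for s
  have ray: "z + s *\<^sub>R PW blk i z = scale_params blk (\<lambda>l. if l = i then 1 + s else 1) z" for s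
    by (cases z) (auto simp: scale_params_def scale_blocks_def PW_def vec_eq_iff algebra_simps)
  have "f 0 = f s" if "\<bar>0 - s\<bar> < 1" for s
  proof -
    have "\<forall>l<m. (if l = i then 1 + s else 1) > (0::real)" using that by auto
    then show ?thesis using L_scale_params[OF z] unfolding f_def ray[of s] by simp
  qed
  moreover have "(f has_real_derivative (G z \<bullet> PW blk i z)) (at 0)"
    using has_real_derivative_along_line[of L G z 0 "PW blk i z"] grad z unfolding f_def by simp
  ultimately show ?thesis
    using DERIV_local_const[OF _ zero_less_one] by blast
qed

lemma grad_scale_params:
  assumes z: "z \<in> D" and a: "\<forall>i<m. a i > 0"
  shows "G (scale_params blk a z) = scale_params blk (\<lambda>i. 1 / a i) (G z)"
proof -
  have a0: "\<forall>i<m. a i \<noteq> 0" using a by auto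
  have "((\<lambda>z. L (scale_params blk a z)) has_derivative
      (\<lambda>h. G (scale_params blk a z) \<bullet> scale_params blk a h)) (at z)"
    using grad scale_params_mem_dom_nz[OF z a0]
    by (intro has_derivative_compose[OF bounded_linear_imp_has_derivative[OF bounded_linear_scale_params]])
      auto
  then have "(L has_derivative (\<lambda>h. G (scale_params blk a z) \<bullet> scale_params blk a h)) (at z)"
    by (rule has_derivative_transform_within_open[OF _ open_dom_nz z]) (simp add: L_scale_params a)
  with grad z have "(\<lambda>h. G z \<bullet> h) = (\<lambda>h. G (scale_params blk a z) \<bullet> scale_params blk a h)"
    by (intro has_derivative_unique) auto
  then have "\<forall>h. h \<bullet> G z = h \<bullet> scale_params blk a (G (scale_params blk a z))"
    by (metis inner_commute inner_scale_params)
  then have "G z = scale_params blk a (G (scale_params blk a z))"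
    using vector_eq_ldot by blast
  then show ?thesis using scale_params_inverse(1)[OF blk_range a0] by metis
qed

lemma hess_scale_params:
  assumes z: "z \<in> D" and a: "\<forall>i<m. a i > 0"
  shows "H (scale_params blk a z) (scale_params blk a h) = scale_params blk (\<lambda>i. 1 / a i) (H z h)"
proof -
  have a0: "\<forall>i<m. a i \<noteq> 0" using a by auto
  have "((\<lambda>z. G (scale_params blk a z)) has_derivative
      (\<lambda>h. H (scale_params blk a z) (scale_params blk a h))) (at z)"
    using hess scale_params_mem_dom_nz[OF z a0]
    by (intro has_derivative_compose[OF bounded_linear_imp_has_derivative[OF bounded_linear_scale_params]])
      auto
  moreover have "((\<lambda>z. G (scale_params blk a z)) has_derivative
      (\<lambda>h. scale_params blk (\<lambda>i. 1 / a i) (H z h))) (at z)"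
  proof (rule has_derivative_transform_within_open[OF _ open_dom_nz z])
    show "((\<lambda>z. scale_params blk (\<lambda>i. 1 / a i) (G z)) has_derivative
        (\<lambda>h. scale_params blk (\<lambda>i. 1 / a i) (H z h))) (at z)"
      using hess z by (intro bounded_linear.has_derivative[OF bounded_linear_scale_params]) auto
  qed (simp add: grad_scale_params a)
  ultimately show ?thesis
    using has_derivative_unique by metis
qed

lemma hess_symmetric: "w \<in> D \<Longrightarrow> H w v \<bullet> u = H w u \<bullet> v"
  by (rule hessian_symmetric[OF open_dom_nz grad hess hess_cont])

lemma m_pos: "m > 0"
  using blk_range by (metis gr_zeroI not_less0)

lemma smoothness_constants_nonneg:
  shows "i < m \<Longrightarrow> j < m \<Longrightarrow> 0 \<le> Lvv i j" and "i < m \<Longrightarrow> 0 \<le> Lvg i" and "0 \<le> Lgg"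
proof -
  obtain V where V: "unit_blocks blk m V" using unit_blocks_exist by blast
  note bl = bounded_linear_comp_blinfun_comp
  show "i < m \<Longrightarrow> j < m \<Longrightarrow> 0 \<le> Lvv i j"
    using AV_vv V onorm_pos_le[OF bl[OF bounded_linear_PW bounded_linear_PW]] by (meson order_trans)
  show "i < m \<Longrightarrow> 0 \<le> Lvg i"
    using AV_vg V onorm_pos_le[OF bl[OF bounded_linear_PG bounded_linear_PW]] by (meson order_trans)
  show "0 \<le> Lgg"
    using AV_gg V onorm_pos_le[OF bl[OF bounded_linear_PG bounded_linear_PG]] by (meson order_trans)
qed

definition block_weighted_norm2 :: "(real^'k) \<times> (real^'p) \<Rightarrow> real" where
  "block_weighted_norm2 d = (\<Sum>i<m. Ltil_v m Lvv Lvg i * (norm (PW blk i d))\<^sup>2)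
     + Ltil_g m Lvg Lgg * (norm (PG d))\<^sup>2"

lemma hess_quadratic_le_at_unit_blocks:
  assumes v: "unit_blocks blk m v"
  shows "d \<bullet> H (v, g) d \<le> block_weighted_norm2 d"
proof -
  define A where "A = H (v, g)"
  define a where "a i = norm (PW blk i d)" for i
  define ag where "ag = norm (PG d)"
  have sym: "A x \<bullet> y = A y \<bullet> x" for x y
    unfolding A_def by (rule hess_symmetric[OF unit_blocks_mem_dom[OF v]])
  have vv: "PW blk j d \<bullet> A (PW blk i d) \<le> Lvv i j * a j * a i" if "i < m" "j < m" for i j
    unfolding A_def a_def using AV_vv v that
    by (intro inner_proj_blinfun_proj_le bounded_linear_PW inner_PW_left PW_idem) auto
  have vg: "PG d \<bullet> A (PW blk i d) \<le> Lvg i * ag * a i" if "i < m" for i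
    unfolding A_def a_def ag_def using AV_vg v that
    by (intro inner_proj_blinfun_proj_le bounded_linear_PW bounded_linear_PG inner_PG_left PW_idem) auto
  have gg: "PG d \<bullet> A (PG d) \<le> Lgg * ag * ag"
    unfolding A_def ag_def using AV_gg v
    by (intro inner_proj_blinfun_proj_le bounded_linear_PG inner_PG_left PG_idem) auto
  have "(\<Sum>i<m. \<Sum>j<m. PW blk j d \<bullet> A (PW blk i d)) \<le> (\<Sum>i<m. (\<Sum>j<m. Lvv i j) * (a i)\<^sup>2)"
  proof (rule sum_pairs_le_row_sums)
    fix i j assume ij: "i < m" "j < m"
    show "PW blk j d \<bullet> A (PW blk i d) \<le> Lvv i j * a i * a j"
      using vv[OF ij] by (simp add: algebra_simps)
    have "PW blk j d \<bullet> A (PW blk i d) = PW blk i d \<bullet> A (PW blk j d)"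
      by (metis inner_commute sym)
    then show "PW blk j d \<bullet> A (PW blk i d) \<le> Lvv j i * a i * a j"
      using vv[OF ij(2,1)] by simp
  qed (use smoothness_constants_nonneg a_def in auto)
  moreover have "(\<Sum>j<m. PW blk j d \<bullet> A (PG d)) + (\<Sum>i<m. PG d \<bullet> A (PW blk i d))
      \<le> (\<Sum>i<m. Lvg i * (a i)\<^sup>2) + (\<Sum>i<m. Lvg i) * ag\<^sup>2"
  proof -
    have "(\<Sum>j<m. PW blk j d \<bullet> A (PG d)) = (\<Sum>i<m. PG d \<bullet> A (PW blk i d))"
      by (intro sum.cong refl) (metis inner_commute sym)
    then show ?thesis
      using sum_cross_terms_le[OF vg smoothness_constants_nonneg(2)] by (simp add: sum_distrib_left)
  qed
  moreover have "PG d \<bullet> A (PG d) \<le> real m * Lgg * ag\<^sup>2"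
  proof -
    have "1 * (Lgg * ag\<^sup>2) \<le> real m * (Lgg * ag\<^sup>2)"
      using m_pos smoothness_constants_nonneg(3) by (intro mult_right_mono) auto
    with gg show ?thesis by (simp add: power2_eq_square algebra_simps)
  qed
  moreover have "block_weighted_norm2 d = (\<Sum>i<m. (\<Sum>j<m. Lvv i j) * (a i)\<^sup>2)
      + ((\<Sum>i<m. Lvg i * (a i)\<^sup>2) + (\<Sum>i<m. Lvg i) * ag\<^sup>2) + real m * Lgg * ag\<^sup>2"
    unfolding block_weighted_norm2_def Ltil_v_def Ltil_g_def a_def ag_def
    by (simp add: algebra_simps sum.distrib)
  ultimately show ?thesis
    using inner_blinfun_block_expansion[OF blk_range, of d A] unfolding A_def by linarith
qed

text \<open>At w = (V rescaled blockwise by r i \<ge> 1, g) the Hessian is that at the normalized point,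
  conjugated by the rescaling, which only shrinks the blocks of d.\<close>
lemma hess_quadratic_le:
  assumes w: "w \<in> D" and ge1: "\<forall>i<m. 1 \<le> norm (blockproj blk i (fst w))"
  shows "d \<bullet> H w d \<le> block_weighted_norm2 d"
proof -
  define r where "r i = norm (blockproj blk i (fst w))" for i
  have r: "\<forall>i<m. r i > 0" using ge1 unfolding r_def by (meson less_le_trans zero_less_one)
  have nz: "\<forall>i<m. blockproj blk i (fst w) \<noteq> 0" using w by (simp add: dom_nz_def)
  define v where "v = normalize_blocks blk (fst w)"
  have v: "unit_blocks blk m v" unfolding v_def by (rule unit_blocks_normalize_blocks[OF nz])
  have w_eq: "w = scale_params blk r (v, snd w)"
    using scale_blocks_normalize_blocks[OF blk_range nz] unfolding scale_params_def v_def r_def by simp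
  define e where "e = scale_params blk (\<lambda>i. 1 / r i) d"
  have d_eq: "d = scale_params blk r e"
    unfolding e_def using r by (intro scale_params_inverse(2)[OF blk_range, symmetric]) auto
  have "H w d = scale_params blk (\<lambda>i. 1 / r i) (H (v, snd w) e)"
    using hess_scale_params[OF unit_blocks_mem_dom[OF v, of "snd w"] r, where h = e]
    unfolding w_eq[symmetric] d_eq[symmetric] .
  then have "d \<bullet> H w d = e \<bullet> H (v, snd w) e"
    by (simp add: e_def inner_scale_params)
  also have "\<dots> \<le> block_weighted_norm2 e" by (rule hess_quadratic_le_at_unit_blocks[OF v])
  also have "\<dots> \<le> block_weighted_norm2 d"
    unfolding block_weighted_norm2_def
  proof (intro add_mono sum_mono mult_left_mono)
    fix i assume i: "i \<in> {..<m}"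
    then have "1 \<le> r i" using ge1 unfolding r_def by auto
    then have "(1 / r i)\<^sup>2 * (norm (PW blk i d))\<^sup>2 \<le> 1 * (norm (PW blk i d))\<^sup>2"
      by (intro mult_right_mono) (auto simp: power_le_one)
    then show "(norm (PW blk i e))\<^sup>2 \<le> (norm (PW blk i d))\<^sup>2"
      using \<open>1 \<le> r i\<close> by (simp add: e_def PW_scale_params power_divide)
    show "0 \<le> Ltil_v m Lvv Lvg i" using pos_v i by (simp add: less_imp_le)
  qed (use pos_g in \<open>simp_all add: e_def PG_scale_params less_imp_le\<close>)
  finally show ?thesis .
qed

definition precond_step :: "(real^'k) \<times> (real^'p) \<Rightarrow> (real^'k) \<times> (real^'p)" where
  "precond_step z = ((\<chi> j. - (1 / Ltil_v m Lvv Lvg (blk j)) * fst (G z) $ j),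
      - (1 / Ltil_g m Lvg Lgg) *\<^sub>R snd (G z))"

lemma PW_precond_step: "PW blk i (precond_step z) = (- (1 / Ltil_v m Lvv Lvg i)) *\<^sub>R PW blk i (G z)"
  by (simp add: precond_step_def PW_def vec_eq_iff)

lemma PG_precond_step: "PG (precond_step z) = (- (1 / Ltil_g m Lvg Lgg)) *\<^sub>R PG (G z)"
  by (simp add: precond_step_def PG_def)

definition precond_norm2 :: "(real^'k) \<times> (real^'p) \<Rightarrow> real" where
  "precond_norm2 x = (\<Sum>i<m. (norm (PW blk i x))\<^sup>2 / Ltil_v m Lvv Lvg i)
     + (norm (PG x))\<^sup>2 / Ltil_g m Lvg Lgg"

lemma inner_grad_precond_step: "G z \<bullet> precond_step z = - precond_norm2 (G z)"
  unfolding inner_PW_PG_split[OF blk_range, of "G z"] PW_precond_step PG_precond_step precond_norm2_def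
  by (simp add: power2_norm_eq_inner sum_negf)

lemma block_weighted_norm2_precond_step: "block_weighted_norm2 (precond_step z) = precond_norm2 (G z)"
proof -
  have sq: "c * (norm ((- (1 / c)) *\<^sub>R x))\<^sup>2 = (norm x)\<^sup>2 / c"
    if "c > 0" for c :: real and x :: "(real^'k) \<times> (real^'p)"
    using that by (simp add: power2_eq_square field_simps)
  show ?thesis
    unfolding block_weighted_norm2_def precond_norm2_def PW_precond_step PG_precond_step
    using pos_v pos_g by (intro arg_cong2[where f = "(+)"] sum.cong refl sq) auto
qed

lemma norm2_le_Ltil_max_mul_precond_norm2:
  "(norm x)\<^sup>2 \<le> Ltil_max m Lvv Lvg Lgg * precond_norm2 x"
proof -
  define Lm where "Lm = Ltil_max m Lvv Lvg Lgg"
  have "Lm > 0" unfolding Lm_def by (rule Ltil_max_pos[OF pos_g])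
  have "(norm x)\<^sup>2 / Lm = (\<Sum>i<m. (norm (PW blk i x))\<^sup>2 / Lm) + (norm (PG x))\<^sup>2 / Lm"
    unfolding norm2_PW_PG_split[OF blk_range, of x] by (simp add: sum_divide_distrib add_divide_distrib)
  also have "\<dots> \<le> precond_norm2 x"
    unfolding precond_norm2_def using pos_v pos_g \<open>Lm > 0\<close> unfolding Lm_def
    by (intro add_mono sum_mono divide_left_mono Ltil_v_le_Ltil_max Ltil_g_le_Ltil_max)
      (auto intro: mult_pos_pos)
  finally show ?thesis using \<open>Lm > 0\<close> unfolding Lm_def by (simp add: pos_divide_le_eq mult.commute)
qed

text \<open>By Euler's identity the step is orthogonal to each unit block, so by Pythagoras no block
  along the step becomes shorter than 1.\<close>
lemma norm_blockproj_along_precond_step: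
  assumes v: "unit_blocks blk m v" and i: "i < m"
  shows "1 \<le> norm (blockproj blk i (fst ((v, g) + s *\<^sub>R precond_step (v, g))))"
proof -
  define p where "p = blockproj blk i (fst (precond_step (v, g)))"
  have "p = (- (1 / Ltil_v m Lvv Lvg i)) *\<^sub>R blockproj blk i (fst (G (v, g)))"
    using PW_precond_step[of i "(v, g)"] by (simp add: p_def PW_def)
  moreover have "G (v, g) \<bullet> PW blk i (v, g) = blockproj blk i (fst (G (v, g))) \<bullet> blockproj blk i v"
    by (simp add: PW_def inner_prod_def inner_blockproj_right[of "fst (G (v, g))"])
  ultimately have "blockproj blk i v \<bullet> p = 0"
    using inner_grad_PW_self[OF unit_blocks_mem_dom[OF v] i] by (simp add: inner_commute)
  then have "orthogonal (blockproj blk i v) (s *\<^sub>R p)"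
    by (simp add: orthogonal_def)
  from norm_add_Pythagorean[OF this]
  have "(norm (blockproj blk i v))\<^sup>2 \<le> (norm (blockproj blk i (fst ((v, g) + s *\<^sub>R precond_step (v, g)))))\<^sup>2"
    by (simp add: p_def blockproj_add blockproj_scaleR)
  moreover have "norm (blockproj blk i v) = 1" using v i by (simp add: unit_blocks_def)
  ultimately show ?thesis
    by (metis norm_ge_zero power2_le_imp_le)
qed

lemma descent_at_unit_blocks:
  assumes v: "unit_blocks blk m v"
  shows "L ((v, g) + precond_step (v, g))
      \<le> L (v, g) - (norm (G (v, g)))\<^sup>2 / (2 * Ltil_max m Lvv Lvg Lgg)"
proof -
  define z where "z = (v, g)"
  have ge1: "\<forall>i<m. 1 \<le> norm (blockproj blk i (fst (z + s *\<^sub>R precond_step z)))" for s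
    using norm_blockproj_along_precond_step[OF v] unfolding z_def by blast
  have seg: "z + s *\<^sub>R precond_step z \<in> D" for s
  proof -
    have "blockproj blk i (fst (z + s *\<^sub>R precond_step z)) \<noteq> 0" if "i < m" for i
      using ge1[of s] that by fastforce
    then show ?thesis by (simp add: dom_nz_def)
  qed
  have "L (z + precond_step z) \<le> L z + G z \<bullet> precond_step z + block_weighted_norm2 (precond_step z) / 2"
    using seg ge1 hess_quadratic_le by (intro second_order_upper_bound_on_segment[OF grad hess]) auto
  also have "\<dots> = L z - precond_norm2 (G z) / 2"
    by (simp add: inner_grad_precond_step block_weighted_norm2_precond_step)
  also have "\<dots> \<le> L z - (norm (G z))\<^sup>2 / (2 * Ltil_max m Lvv Lvg Lgg)"
    using norm2_le_Ltil_max_mul_precond_norm2[of "G z"] Ltil_max_pos[OF pos_g]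
    by (simp add: field_simps)
  finally show ?thesis unfolding z_def .
qed

text \<open>A PSI-GD step from W is the rescaling, by the block norms of W, of the preconditioned step
  from the normalized point: the factor \<parallel>w^(i)\<parallel>^2 cancels the rescaling of the gradient.\<close>
lemma psi_gd_update_eq:
  assumes xg: "(x, g) \<in> D"
    and x': "x' = (\<chi> j. x $ j - (1 / Ltil_v m Lvv Lvg (blk j)) * (norm (blockproj blk (blk j) x))\<^sup>2
          * fst (G (x, g)) $ j)"
    and g': "g' = g - (1 / Ltil_g m Lvg Lgg) *\<^sub>R snd (G (x, g))"
  shows "(x', g') = scale_params blk (\<lambda>i. norm (blockproj blk i x))
      ((normalize_blocks blk x, g) + precond_step (normalize_blocks blk x, g))"
proof -
  define n where "n i = norm (blockproj blk i x)" for i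
  define z where "z = (normalize_blocks blk x, g)"
  have nz: "\<forall>i<m. blockproj blk i x \<noteq> 0" using xg by (simp add: dom_nz_def)
  then have n: "\<forall>i<m. n i > 0" unfolding n_def by auto
  have z: "z \<in> D"
    unfolding z_def by (rule unit_blocks_mem_dom[OF unit_blocks_normalize_blocks[OF nz]])
  have "(x, g) = scale_params blk n z"
    using scale_blocks_normalize_blocks[OF blk_range nz] unfolding scale_params_def z_def n_def by simp
  then have Gx: "G (x, g) = scale_params blk (\<lambda>i. 1 / n i) (G z)"
    using grad_scale_params[OF z n] by simp
  have "x' $ j = n (blk j) * (fst z $ j - 1 / Ltil_v m Lvv Lvg (blk j) * fst (G z) $ j)" for j
  proof -
    have "n (blk j) \<noteq> 0" using n blk_range by (metis less_irrefl)
    moreover have "x $ j = n (blk j) * fst z $ j"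
      using calculation unfolding z_def normalize_blocks_def n_def by simp
    ultimately show ?thesis
      unfolding x' Gx n_def[symmetric] by (simp add: scale_params_def scale_blocks_def power2_eq_square field_simps)
  qed
  moreover have "g' = snd z - (1 / Ltil_g m Lvg Lgg) *\<^sub>R snd (G z)"
    unfolding g' Gx by (simp add: scale_params_def z_def)
  ultimately show ?thesis
    unfolding z_def[symmetric] n_def[symmetric]
    by (simp add: scale_params_def scale_blocks_def precond_step_def vec_eq_iff algebra_simps)
qed

lemma psi_gd_step:
  assumes xg: "(x, g) \<in> D"
    and x': "x' = (\<chi> j. x $ j - (1 / Ltil_v m Lvv Lvg (blk j)) * (norm (blockproj blk (blk j) x))\<^sup>2
          * fst (G (x, g)) $ j)"
    and g': "g' = g - (1 / Ltil_g m Lvg Lgg) *\<^sub>R snd (G (x, g))"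
  shows "(x', g') \<in> D"
    and "L (x', g') \<le> L (x, g) - (norm (G (normalize_blocks blk x, g)))\<^sup>2 / (2 * Ltil_max m Lvv Lvg Lgg)"
proof -
  define n where "n i = norm (blockproj blk i x)" for i
  define v where "v = normalize_blocks blk x"
  have nz: "\<forall>i<m. blockproj blk i x \<noteq> 0" using xg by (simp add: dom_nz_def)
  then have n: "\<forall>i<m. n i > 0" unfolding n_def by auto
  have v: "unit_blocks blk m v" unfolding v_def by (rule unit_blocks_normalize_blocks[OF nz])
  have step_dom: "(v, g) + precond_step (v, g) \<in> D"
    using norm_blockproj_along_precond_step[OF v, of _ g 1] by (force simp: dom_nz_def)
  have eq: "(x', g') = scale_params blk n ((v, g) + precond_step (v, g))"
    using psi_gd_update_eq[OF xg x' g'] unfolding n_def v_def .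
  show "(x', g') \<in> D"
    unfolding eq using n by (intro scale_params_mem_dom_nz[OF step_dom]) auto
  have "(x, g) = scale_params blk n (v, g)"
    using scale_blocks_normalize_blocks[OF blk_range nz] unfolding scale_params_def v_def n_def by simp
  then have "L (x, g) = L (v, g)"
    using L_scale_params[OF unit_blocks_mem_dom[OF v] n] by simp
  moreover have "L (x', g') = L ((v, g) + precond_step (v, g))"
    unfolding eq by (rule L_scale_params[OF step_dom n])
  ultimately show "L (x', g') \<le> L (x, g) - (norm (G (normalize_blocks blk x, g)))\<^sup>2 / (2 * Ltil_max m Lvv Lvg Lgg)"
    using descent_at_unit_blocks[OF v] unfolding v_def by simp
qed

lemma psi_gd_telescoped:
  assumes init: "(W 0, g 0) \<in> D"
    and stepW: "\<forall>t. W (Suc t) = (\<chi> j. W t $ j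
        - (1 / Ltil_v m Lvv Lvg (blk j)) * (norm (blockproj blk (blk j) (W t)))\<^sup>2
          * fst (G (W t, g t)) $ j)"
    and stepg: "\<forall>t. g (Suc t) = g t - (1 / Ltil_g m Lvg Lgg) *\<^sub>R snd (G (W t, g t))"
  shows "(W t, g t) \<in> D \<and> L (W t, g t) \<le> L (W 0, g 0)
      - (\<Sum>s<t. (norm (G (normalize_blocks blk (W s), g s)))\<^sup>2) / (2 * Ltil_max m Lvv Lvg Lgg)"
proof (induction t)
  case (Suc t)
  with psi_gd_step[OF _ stepW[rule_format] stepg[rule_format]] show ?case
    by (fastforce simp: add_divide_distrib)
qed (use init in simp)

end

theorem theorem2:
  fixes blk :: "'k::finite \<Rightarrow> nat" and m :: nat
    and L :: "(real^'k) \<times> (real^'p::finite) \<Rightarrow> real"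
    and G :: "(real^'k) \<times> (real^'p) \<Rightarrow> (real^'k) \<times> (real^'p)"
    and H :: "(real^'k) \<times> (real^'p) \<Rightarrow> ((real^'k) \<times> (real^'p)) \<Rightarrow>\<^sub>L ((real^'k) \<times> (real^'p))"
    and Lvv :: "nat \<Rightarrow> nat \<Rightarrow> real" and Lvg :: "nat \<Rightarrow> real" and Lgg :: real
    and W :: "nat \<Rightarrow> real^'k" and g :: "nat \<Rightarrow> real^'p" and T :: nat
  assumes blk_range: "\<forall>j. blk j < m"
    and blk_nonempty: "\<forall>i<m. \<exists>j. blk j = i"
    \<comment> \<open>L is C^2 on the domain (all blocks nonzero), with gradient G and Hessian H\<close>
    and grad: "\<forall>z\<in>dom_nz blk m. (L has_derivative (\<lambda>h. G z \<bullet> h)) (at z)"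
    and hess: "\<forall>z\<in>dom_nz blk m. (G has_derivative blinfun_apply (H z)) (at z)"
    and hess_cont: "continuous_on (dom_nz blk m) H"
    and psi: "PSI blk m L"
    and bdd: "bdd_below (L ` dom_nz blk m)"
    \<comment> \<open>assumption (A_V): spectral norms of Hessian blocks at normalized points\<close>
    and AV_vv: "\<forall>V gg i j. unit_blocks blk m V \<longrightarrow> i < m \<longrightarrow> j < m \<longrightarrow>
        onorm (PW blk j \<circ> blinfun_apply (H (V, gg)) \<circ> PW blk i) \<le> Lvv i j"
    and AV_vg: "\<forall>V gg i. unit_blocks blk m V \<longrightarrow> i < m \<longrightarrow>
        onorm (PG \<circ> blinfun_apply (H (V, gg)) \<circ> PW blk i) \<le> Lvg i"
    and AV_gg: "\<forall>V gg. unit_blocks blk m V \<longrightarrow>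
        onorm (PG \<circ> blinfun_apply (H (V, gg)) \<circ> PG) \<le> Lgg"
    and pos_v: "\<forall>i<m. Ltil_v m Lvv Lvg i > 0"
    and pos_g: "Ltil_g m Lvg Lgg > 0"
    \<comment> \<open>PSI-GD with eta_i = 1 / Ltil_v i and eta_g = 1 / Ltil_g\<close>
    and init: "(W 0, g 0) \<in> dom_nz blk m"
    and stepW: "\<forall>t. W (Suc t) = (\<chi> j. W t $ j
        - (1 / Ltil_v m Lvv Lvg (blk j)) * (norm (blockproj blk (blk j) (W t)))\<^sup>2
          * fst (G (W t, g t)) $ j)"
    and stepg: "\<forall>t. g (Suc t) = g t - (1 / Ltil_g m Lvg Lgg) *\<^sub>R snd (G (W t, g t))"
    and T: "T \<ge> 1"
  shows "(MIN t\<in>{..<T}. (norm (G (normalize_blocks blk (W t), g t)))\<^sup>2)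
      \<le> 2 * Ltil_max m Lvv Lvg Lgg * (L (W 0, g 0) - Inf (L ` dom_nz blk m)) / real T"
proof -
  have "\<exists>V. unit_blocks blk m V"
    using init unit_blocks_normalize_blocks[of m blk "W 0"] by (auto simp: dom_nz_def)
  then interpret psi_loss blk m L G H Lvv Lvg Lgg
    by (intro psi_loss.intro blk_range grad hess hess_cont psi AV_vv AV_vg AV_gg pos_v pos_g)
  define Lm where "Lm = Ltil_max m Lvv Lvg Lgg"
  define c where "c t = (norm (G (normalize_blocks blk (W t), g t)))\<^sup>2" for t
  from psi_gd_telescoped[OF init stepW stepg, of T] bdd
  have "(\<Sum>t<T. c t) / (2 * Lm) \<le> L (W 0, g 0) - Inf (L ` dom_nz blk m)"
    unfolding c_def Lm_def by (smt (verit) cInf_lower imageI)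
  with Ltil_max_pos[OF pos_g] have "(\<Sum>t<T. c t) / real T \<le> 2 * Lm * (L (W 0, g 0) - Inf (L ` dom_nz blk m)) / real T"
    unfolding Lm_def by (intro divide_right_mono) (auto simp: pos_divide_le_eq mult.commute)
  then show ?thesis
    using Min_lessThan_le_average[OF T, of c] unfolding c_def Lm_def by linarith
qed

end
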